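(* Let $\mathcal{N}$ denote the non-classicality of a temporal KD distribution. Fix the channels $\mathcal{E}_{t_j\leftarrow t_{j-1}}$ and the measurements, and regard the right temporal KD distribution $\overrightarrow{Q}_{\rm KD}[\rho_{t_0}]$ as a function of the initial density operator. Then for all density operators $\rho_{t_0},\omega_{t_0}$ and $\lambda\in[0,1]$, $$\mathcal{N}\big[\overrightarrow{Q}_{\rm KD}[\lambda\rho_{t_0}+(1-\lambda)\omega_{t_0}]\big]\le\lambda\,\mathcal{N}\big[\overrightarrow{Q}_{\rm KD}[\rho_{t_0}]\big]+(1-\lambda)\,\mathcal{N}\big[\overrightarrow{Q}_{\rm KD}[\omega_{t_0}]\big].$$ The same holds for the left and doubled temporal KD distributions.
   Context: A multi-time quantum process $(\rho_{t_0},\mathcal{E}_{t_1\leftarrow t_0},\dots,\mathcal{E}_{t_n\leftarrow t_{n-1}})$ consists of a density operator and CPTP maps on finite-dimensional spaces, extended linearly to all operators; complete families of orthogonal projectors are fixed at each time. $\overrightarrow{Q}_{\rm KD}(b_n,\dots,b_0)=\operatorname{Tr}[\mathcal{E}_{t_n\leftarrow t_{n-1}}(\cdots\mathcal{E}_{t_1\leftarrow t_0}(\rho_{t_0}\Pi^{t_0}_{b_0})\Pi^{t_1}_{b_1}\cdots)\Pi^{t_n}_{b_n}]$; $\overleftarrow{Q}_{\rm KD}(a_n,\dots,a_0)=\operatorname{Tr}[\Pi^{t_n}_{a_n}\mathcal{E}_{t_n\leftarrow t_{n-1}}(\cdots\Pi^{t_1}_{a_1}\mathcal{E}_{t_1\leftarrow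 t_0}(\Pi^{t_0}_{a_0}\rho_{t_0})\cdots)]$; $\overleftrightarrow{Q}_{\rm KD}(a;b)=\operatorname{Tr}[\Pi^{t_n}_{a_n}\mathcal{E}_{t_n\leftarrow t_{n-1}}(\cdots\Pi^{t_1}_{a_1}\mathcal{E}_{t_1\leftarrow t_0}(\Pi^{t_0}_{a_0}\rho_{t_0}\Pi^{t_0}_{b_0})\Pi^{t_1}_{b_1}\cdots)\Pi^{t_n}_{b_n}]$. For any such (complex-valued) distribution $Q$, $\mathcal{N}[Q]=\sum_{\text{all outcomes}}|Q|-1$. *)

theory Defs
  imports "Jordan_Normal_Form.Matrix"
begin

definition mtrace :: "complex mat \<Rightarrow> complex" where
  "mtrace A = (\<Sum>i<dim_row A. A $$ (i,i))"

definition hermitian_op :: "nat \<Rightarrow> complex mat \<Rightarrow> bool" where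
  "hermitian_op d A \<longleftrightarrow> A \<in> carrier_mat d d \<and>
     (\<forall>i<d. \<forall>j<d. A $$ (i,j) = cnj (A $$ (j,i)))"

definition psd :: "nat \<Rightarrow> complex mat \<Rightarrow> bool" where
  "psd d A \<longleftrightarrow> hermitian_op d A \<and>
     (\<forall>v\<in>carrier_vec d. \<exists>r::real. r \<ge> 0 \<and>
        (\<Sum>i<d. \<Sum>j<d. cnj (v $ i) * A $$ (i,j) * v $ j) = complex_of_real r)"

definition density_op :: "nat \<Rightarrow> complex mat \<Rightarrow> bool" where
  "density_op d \<rho> \<longleftrightarrow> psd d \<rho> \<and> mtrace \<rho> = 1"

definition mat_unit :: "nat \<Rightarrow> nat \<Rightarrow> nat \<Rightarrow> complex mat" where
  "mat_unit d i j = mat d d (\<lambda>(r,s). if r = i \<and> s = j then 1 else 0)"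

definition linear_op_map :: "nat \<Rightarrow> nat \<Rightarrow> (complex mat \<Rightarrow> complex mat) \<Rightarrow> bool" where
  "linear_op_map d1 d2 E \<longleftrightarrow>
     (\<forall>A\<in>carrier_mat d1 d1. E A \<in> carrier_mat d2 d2) \<and>
     (\<forall>A\<in>carrier_mat d1 d1. \<forall>B\<in>carrier_mat d1 d1. E (A + B) = E A + E B) \<and>
     (\<forall>A\<in>carrier_mat d1 d1. \<forall>c. E (c \<cdot>\<^sub>m A) = c \<cdot>\<^sub>m E A)"

text \<open>Choi matrix  sum_{ij} |i><j| (tensor) E(|i><j|), index (i,k) encoded as i*d2+k.\<close>
definition choi :: "nat \<Rightarrow> nat \<Rightarrow> (complex mat \<Rightarrow> complex mat) \<Rightarrow> complex mat" where
  "choi d1 d2 E = mat (d1*d2) (d1*d2)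
     (\<lambda>(p,q). (E (mat_unit d1 (p div d2) (q div d2))) $$ (p mod d2, q mod d2))"

definition CPTP :: "nat \<Rightarrow> nat \<Rightarrow> (complex mat \<Rightarrow> complex mat) \<Rightarrow> bool" where
  "CPTP d1 d2 E \<longleftrightarrow> linear_op_map d1 d2 E \<and>
     psd (d1*d2) (choi d1 d2 E) \<and>
     (\<forall>A\<in>carrier_mat d1 d1. mtrace (E A) = mtrace A)"

definition proj_family :: "nat \<Rightarrow> 'b set \<Rightarrow> ('b \<Rightarrow> complex mat) \<Rightarrow> bool" where
  "proj_family d B P \<longleftrightarrow> finite B \<and>
     (\<forall>b\<in>B. hermitian_op d (P b) \<and> P b * P b = P b) \<and>
     (\<forall>a\<in>B. \<forall>b\<in>B. a \<noteq> b \<longrightarrow> P a * P b = 0\<^sub>m d d) \<and>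
     (\<forall>i<d. \<forall>j<d. (\<Sum>b\<in>B. P b $$ (i,j)) = (1\<^sub>m d :: complex mat) $$ (i,j))"

definition process_setting ::
  "nat \<Rightarrow> (nat \<Rightarrow> nat) \<Rightarrow> (nat \<Rightarrow> complex mat \<Rightarrow> complex mat) \<Rightarrow>
   (nat \<Rightarrow> 'b set) \<Rightarrow> (nat \<Rightarrow> 'b \<Rightarrow> complex mat) \<Rightarrow> bool" where
  "process_setting n d E B P \<longleftrightarrow>
     (\<forall>j\<in>{1..n}. CPTP (d (j - 1)) (d j) (E j)) \<and>
     (\<forall>j\<le>n. proj_family (d j) (B j) (P j))"

text \<open>Outcome strings (b_0,...,b_n) as functions on {0..n}.\<close>
definition outcomes :: "nat \<Rightarrow> (nat \<Rightarrow> 'b set) \<Rightarrow> (nat \<Rightarrow> 'b) set" where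
  "outcomes n B = PiE {0..n} B"

fun right_op ::
  "(nat \<Rightarrow> complex mat \<Rightarrow> complex mat) \<Rightarrow> (nat \<Rightarrow> 'b \<Rightarrow> complex mat) \<Rightarrow>
   complex mat \<Rightarrow> (nat \<Rightarrow> 'b) \<Rightarrow> nat \<Rightarrow> complex mat" where
  "right_op E P \<rho> b 0 = \<rho> * P 0 (b 0)"
| "right_op E P \<rho> b (Suc j) = E (Suc j) (right_op E P \<rho> b j) * P (Suc j) (b (Suc j))"

fun left_op ::
  "(nat \<Rightarrow> complex mat \<Rightarrow> complex mat) \<Rightarrow> (nat \<Rightarrow> 'b \<Rightarrow> complex mat) \<Rightarrow>
   complex mat \<Rightarrow> (nat \<Rightarrow> 'b) \<Rightarrow> nat \<Rightarrow> complex mat" where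
  "left_op E P \<rho> a 0 = P 0 (a 0) * \<rho>"
| "left_op E P \<rho> a (Suc j) = P (Suc j) (a (Suc j)) * E (Suc j) (left_op E P \<rho> a j)"

fun doubled_op ::
  "(nat \<Rightarrow> complex mat \<Rightarrow> complex mat) \<Rightarrow> (nat \<Rightarrow> 'b \<Rightarrow> complex mat) \<Rightarrow>
   complex mat \<Rightarrow> (nat \<Rightarrow> 'b) \<Rightarrow> (nat \<Rightarrow> 'b) \<Rightarrow> nat \<Rightarrow> complex mat" where
  "doubled_op E P \<rho> a b 0 = P 0 (a 0) * \<rho> * P 0 (b 0)"
| "doubled_op E P \<rho> a b (Suc j) =
     P (Suc j) (a (Suc j)) * E (Suc j) (doubled_op E P \<rho> a b j) * P (Suc j) (b (Suc j))"

definition Q_right where "Q_right n E P \<rho> b = mtrace (right_op E P \<rho> b n)"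
definition Q_left where "Q_left n E P \<rho> a = mtrace (left_op E P \<rho> a n)"
definition Q_doubled where "Q_doubled n E P \<rho> ab = mtrace (doubled_op E P \<rho> (fst ab) (snd ab) n)"

definition nonclass :: "'o set \<Rightarrow> ('o \<Rightarrow> complex) \<Rightarrow> real" where
  "nonclass S Q = (\<Sum>x\<in>S. cmod (Q x)) - 1"

end

theory Submission
  imports Defs
begin

text \<open>Each temporal KD quasiprobability is the trace of a linear function of the initial state
  (channels interleaved with multiplications by projectors), so the distribution of a mixture is
  the same mixture of the distributions, outcome by outcome. The triangle inequality for the
  modulus then makes the \<open>\<ell>\<^sub>1\<close>-norm, and hence the non-classicality, convex.\<close>

lemma linear_op_map_lincomb:
  assumes "linear_op_map d1 d2 F" "A \<in> carrier_mat d1 d1" "B \<in> carrier_mat d1 d1"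
  shows "F (c1 \<cdot>\<^sub>m A + c2 \<cdot>\<^sub>m B) = c1 \<cdot>\<^sub>m F A + c2 \<cdot>\<^sub>m F B"
  using assms unfolding linear_op_map_def by auto

lemma linear_op_map_comp:
  assumes F: "linear_op_map d1 d2 F" and G: "linear_op_map d2 d3 G"
  shows "linear_op_map d1 d3 (\<lambda>A. G (F A))"
  using F G unfolding linear_op_map_def by auto

lemma linear_op_map_mult_right:
  assumes "C \<in> carrier_mat d d"
  shows "linear_op_map d d (\<lambda>A. A * C)"
  using assms unfolding linear_op_map_def
  by (auto simp: add_mult_distrib_mat mult_smult_assoc_mat)

lemma linear_op_map_mult_left:
  assumes "C \<in> carrier_mat d d"
  shows "linear_op_map d d (\<lambda>A. C * A)"
  using assms unfolding linear_op_map_def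
  by (auto simp: mult_add_distrib_mat mult_smult_distrib)

lemma mtrace_lincomb:
  assumes "A \<in> carrier_mat k k" "B \<in> carrier_mat k k"
  shows "mtrace (c1 \<cdot>\<^sub>m A + c2 \<cdot>\<^sub>m B) = c1 * mtrace A + c2 * mtrace B"
  using assms unfolding mtrace_def by (simp add: sum.distrib sum_distrib_left)

lemma nonclass_convex:
  fixes lam :: real
  assumes "finite S" "0 \<le> lam" "lam \<le> 1"
    and mix: "\<And>x. x \<in> S \<Longrightarrow> Qs x = complex_of_real lam * Qr x + complex_of_real (1 - lam) * Qw x"
  shows "nonclass S Qs \<le> lam * nonclass S Qr + (1 - lam) * nonclass S Qw"
proof -
  have "cmod (Qs x) \<le> lam * cmod (Qr x) + (1 - lam) * cmod (Qw x)" if "x \<in> S" for x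
  proof -
    have "cmod (Qs x) \<le> cmod (complex_of_real lam * Qr x) + cmod (complex_of_real (1 - lam) * Qw x)"
      using mix[OF that] norm_triangle_ineq by metis
    also have "\<dots> = lam * cmod (Qr x) + (1 - lam) * cmod (Qw x)"
      using assms(2,3) by (simp only: norm_mult norm_of_real)
    finally show ?thesis .
  qed
  then have "(\<Sum>x\<in>S. cmod (Qs x)) \<le> (\<Sum>x\<in>S. lam * cmod (Qr x) + (1 - lam) * cmod (Qw x))"
    by (rule sum_mono)
  also have "\<dots> = lam * (\<Sum>x\<in>S. cmod (Qr x)) + (1 - lam) * (\<Sum>x\<in>S. cmod (Qw x))"
    by (simp add: sum.distrib sum_distrib_left)
  finally show ?thesis unfolding nonclass_def by (simp add: algebra_simps)
qed

lemma mtrace_linear_op_map_lincomb: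
  assumes F: "linear_op_map d d' F" and A: "A \<in> carrier_mat d d" and B: "B \<in> carrier_mat d d"
  shows "mtrace (F (c1 \<cdot>\<^sub>m A + c2 \<cdot>\<^sub>m B)) = c1 * mtrace (F A) + c2 * mtrace (F B)"
proof -
  have "F A \<in> carrier_mat d' d'" "F B \<in> carrier_mat d' d'"
    using F A B unfolding linear_op_map_def by auto
  then show ?thesis
    unfolding linear_op_map_lincomb[OF F A B] by (rule mtrace_lincomb)
qed

lemma density_op_carrier: "density_op d \<rho> \<Longrightarrow> \<rho> \<in> carrier_mat d d"
  unfolding density_op_def psd_def hermitian_op_def by blast

lemma process_setting_channel:
  assumes "process_setting n d E B P" "Suc j \<le> n"
  shows "linear_op_map (d j) (d (Suc j)) (E (Suc j))"
proof -
  have "Suc j \<in> {1..n}" using assms(2) by simp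
  then have "CPTP (d (Suc j - 1)) (d (Suc j)) (E (Suc j))"
    using assms(1) unfolding process_setting_def by blast
  then show ?thesis unfolding CPTP_def by simp
qed

lemma process_setting_proj_family:
  assumes "process_setting n d E B P" "j \<le> n"
  shows "proj_family (d j) (B j) (P j)"
  using assms unfolding process_setting_def by blast

lemma process_setting_projector:
  assumes ps: "process_setting n d E B P" and b: "b \<in> outcomes n B" and j: "j \<le> n"
  shows "P j (b j) \<in> carrier_mat (d j) (d j)"
proof -
  have "b j \<in> B j" using b j unfolding outcomes_def by auto
  then show ?thesis
    using process_setting_proj_family[OF ps j] unfolding proj_family_def hermitian_op_def by blast
qed

lemma finite_outcomes:
  assumes "process_setting n d E B P"
  shows "finite (outcomes n B)"
  unfolding outcomes_def
  using process_setting_proj_family[OF assms] unfolding proj_family_def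
  by (intro finite_PiE) auto

lemma linear_op_map_right_op:
  assumes ps: "process_setting n d E B P" and b: "b \<in> outcomes n B"
  shows "j \<le> n \<Longrightarrow> linear_op_map (d 0) (d j) (\<lambda>X. right_op E P X b j)"
proof (induction j)
  case 0
  show ?case
    using linear_op_map_mult_right[OF process_setting_projector[OF ps b]] by simp
next
  case (Suc j)
  have IH: "linear_op_map (d 0) (d j) (\<lambda>X. right_op E P X b j)"
    using Suc by simp
  note channel = process_setting_channel[OF ps Suc.prems]
  note proj = linear_op_map_mult_right[OF process_setting_projector[OF ps b Suc.prems]]
  show ?case
    using linear_op_map_comp[OF linear_op_map_comp[OF IH channel] proj] by simp
qed

lemma linear_op_map_left_op:
  assumes ps: "process_setting n d E B P" and a: "a \<in> outcomes n B"
  shows "j \<le> n \<Longrightarrow> linear_op_map (d 0) (d j) (\<lambda>X. left_op E P X a j)"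
proof (induction j)
  case 0
  show ?case
    using linear_op_map_mult_left[OF process_setting_projector[OF ps a]] by simp
next
  case (Suc j)
  have IH: "linear_op_map (d 0) (d j) (\<lambda>X. left_op E P X a j)"
    using Suc by simp
  note channel = process_setting_channel[OF ps Suc.prems]
  note proj = linear_op_map_mult_left[OF process_setting_projector[OF ps a Suc.prems]]
  show ?case
    using linear_op_map_comp[OF linear_op_map_comp[OF IH channel] proj] by simp
qed

lemma linear_op_map_doubled_op:
  assumes ps: "process_setting n d E B P"
    and a: "a \<in> outcomes n B" and b: "b \<in> outcomes n B"
  shows "j \<le> n \<Longrightarrow> linear_op_map (d 0) (d j) (\<lambda>X. doubled_op E P X a b j)"
proof (induction j)
  case 0
  note proj_a = linear_op_map_mult_left[OF process_setting_projector[OF ps a]]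
  note proj_b = linear_op_map_mult_right[OF process_setting_projector[OF ps b]]
  show ?case
    using linear_op_map_comp[OF proj_a proj_b] by simp
next
  case (Suc j)
  have IH: "linear_op_map (d 0) (d j) (\<lambda>X. doubled_op E P X a b j)"
    using Suc by simp
  note channel = process_setting_channel[OF ps Suc.prems]
  note proj_a = linear_op_map_mult_left[OF process_setting_projector[OF ps a Suc.prems]]
  note proj_b = linear_op_map_mult_right[OF process_setting_projector[OF ps b Suc.prems]]
  show ?case
    using linear_op_map_comp[OF linear_op_map_comp[OF linear_op_map_comp[OF IH channel] proj_a] proj_b]
    by simp
qed

lemma Q_right_lincomb:
  assumes ps: "process_setting n d E B P" and b: "b \<in> outcomes n B"
    and "\<rho> \<in> carrier_mat (d 0) (d 0)" "\<omega> \<in> carrier_mat (d 0) (d 0)"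
  shows "Q_right n E P (c1 \<cdot>\<^sub>m \<rho> + c2 \<cdot>\<^sub>m \<omega>) b
    = c1 * Q_right n E P \<rho> b + c2 * Q_right n E P \<omega> b"
  unfolding Q_right_def
  using linear_op_map_right_op[OF ps b order_refl] assms(3,4) by (rule mtrace_linear_op_map_lincomb)

lemma Q_left_lincomb:
  assumes ps: "process_setting n d E B P" and a: "a \<in> outcomes n B"
    and "\<rho> \<in> carrier_mat (d 0) (d 0)" "\<omega> \<in> carrier_mat (d 0) (d 0)"
  shows "Q_left n E P (c1 \<cdot>\<^sub>m \<rho> + c2 \<cdot>\<^sub>m \<omega>) a
    = c1 * Q_left n E P \<rho> a + c2 * Q_left n E P \<omega> a"
  unfolding Q_left_def
  using linear_op_map_left_op[OF ps a order_refl] assms(3,4) by (rule mtrace_linear_op_map_lincomb)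

lemma Q_doubled_lincomb:
  assumes ps: "process_setting n d E B P" and ab: "ab \<in> outcomes n B \<times> outcomes n B"
    and "\<rho> \<in> carrier_mat (d 0) (d 0)" "\<omega> \<in> carrier_mat (d 0) (d 0)"
  shows "Q_doubled n E P (c1 \<cdot>\<^sub>m \<rho> + c2 \<cdot>\<^sub>m \<omega>) ab
    = c1 * Q_doubled n E P \<rho> ab + c2 * Q_doubled n E P \<omega> ab"
proof -
  from ab have "fst ab \<in> outcomes n B" "snd ab \<in> outcomes n B" by auto
  from linear_op_map_doubled_op[OF ps this order_refl] assms(3,4) show ?thesis
    unfolding Q_doubled_def by (rule mtrace_linear_op_map_lincomb)
qed

theorem mainTheorem7:
  fixes n :: nat and d :: "nat \<Rightarrow> nat"
    and E :: "nat \<Rightarrow> complex mat \<Rightarrow> complex mat"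
    and B :: "nat \<Rightarrow> 'b set" and P :: "nat \<Rightarrow> 'b \<Rightarrow> complex mat"
    and \<rho> \<omega> :: "complex mat" and lam :: real
  assumes "process_setting n d E B P"
    and "density_op (d 0) \<rho>" and "density_op (d 0) \<omega>"
    and "0 \<le> lam" and "lam \<le> 1"
  defines "\<sigma> \<equiv> complex_of_real lam \<cdot>\<^sub>m \<rho> + complex_of_real (1 - lam) \<cdot>\<^sub>m \<omega>"
  shows "(nonclass (outcomes n B) (Q_right n E P \<sigma>)
           \<le> lam * nonclass (outcomes n B) (Q_right n E P \<rho>)
             + (1 - lam) * nonclass (outcomes n B) (Q_right n E P \<omega>)) \<and>
         (nonclass (outcomes n B) (Q_left n E P \<sigma>)
           \<le> lam * nonclass (outcomes n B) (Q_left n E P \<rho>)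
             + (1 - lam) * nonclass (outcomes n B) (Q_left n E P \<omega>)) \<and>
         (nonclass (outcomes n B \<times> outcomes n B) (Q_doubled n E P \<sigma>)
           \<le> lam * nonclass (outcomes n B \<times> outcomes n B) (Q_doubled n E P \<rho>)
             + (1 - lam) * nonclass (outcomes n B \<times> outcomes n B) (Q_doubled n E P \<omega>))"
proof -
  note ps = assms(1)
  note states = density_op_carrier[OF assms(2)] density_op_carrier[OF assms(3)]
  have fin: "finite (outcomes n B)" using finite_outcomes[OF ps] .
  note convex = nonclass_convex[OF _ assms(4,5)]
  show ?thesis
    unfolding \<sigma>_def
    by (intro conjI convex fin finite_cartesian_product Q_right_lincomb[OF ps _ states]
        Q_left_lincomb[OF ps _ states] Q_doubled_lincomb[OF ps _ states])
qed

end
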